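(* If $n\ge 0$ is an integer such that $B_{n+1}(t)-B_n(t)$ is a constant polynomial, then $n=2^{m}-2$ for some integer $m\ge 1$, and in that case $B_{n+1}(t)-B_n(t)=1$.
   Context: The Stern polynomials $B_n(t)\in\mathbb{Z}[t]$, $n\ge 0$, are defined by $B_0(t)=0$, $B_1(t)=1$, $B_{2n}(t)=tB_n(t)$ and $B_{2n+1}(t)=B_n(t)+B_{n+1}(t)$ for $n\ge 1$. *)

theory Defs
  imports "HOL-Computational_Algebra.Polynomial"
begin

function stern_poly :: "nat \<Rightarrow> int poly" where
  "stern_poly n =
     (if n = 0 then 0
      else if n = 1 then 1
      else if even n then [:0, 1:] * stern_poly (n div 2)
      else stern_poly (n div 2) + stern_poly (n div 2 + 1))"
  by auto
termination
  by (relation "measure id") (auto elim!: oddE)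

end

theory Submission
  imports Defs
begin

(* Write D = B_{n+1} - B_n and suppose D is a constant c.
   Evaluating Stern polynomials at special points turns the hypothesis into
   arithmetic:
     - B_n(2) = n, so c = D(2) = 1;
     - B_n(0) = 1 for n odd and 0 for n even, so D(0) = 1 forces n even, n = 2k;
     - B_n(1) is Stern's diatomic sequence, which is >= 1 for n >= 1 and equals 1
       only at powers of two.  For k >= 1 the recursion gives
       D(1) = B_k(1) + B_{k+1}(1) - B_k(1) = B_{k+1}(1), so k + 1 = 2^j. *)

declare stern_poly.simps [simp del]

lemma stern_poly_0 [simp]: "stern_poly 0 = 0"
  by (subst stern_poly.simps) simp

lemma stern_poly_1 [simp]: "stern_poly (Suc 0) = 1"
  by (subst stern_poly.simps) simp

lemma stern_poly_even:
  "k \<ge> 1 \<Longrightarrow> stern_poly (2 * k) = [:0, 1:] * stern_poly k"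
  by (subst stern_poly.simps) simp

lemma stern_poly_odd:
  "k \<ge> 1 \<Longrightarrow> stern_poly (Suc (2 * k)) = stern_poly k + stern_poly (Suc k)"
  by (subst stern_poly.simps) simp

lemma stern_induct [case_names zero one even odd]:
  fixes n :: nat
  assumes "P 0" and "P 1"
    and "\<And>k. k \<ge> 1 \<Longrightarrow> P k \<Longrightarrow> P (2 * k)"
    and "\<And>k. k \<ge> 1 \<Longrightarrow> P k \<Longrightarrow> P (k + 1) \<Longrightarrow> P (2 * k + 1)"
  shows "P n"
proof (induction n rule: less_induct)
  case (less n)
  consider "n = 0" | "n = 1" | k where "k \<ge> 1" "n = 2 * k"
    | k where "k \<ge> 1" "n = 2 * k + 1"
  proof (cases "even n")
    case True
    then obtain k where "n = 2 * k" by blast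
    then show ?thesis using that by (cases "k = 0") auto
  next
    case False
    then obtain k where "n = 2 * k + 1" by (blast elim: oddE)
    then show ?thesis using that by (cases "k = 0") auto
  qed
  then show ?case
  proof cases
    case (3 k)
    then show ?thesis using assms(3) less[of k] by simp
  next
    case (4 k)
    then show ?thesis using assms(4) less[of k] less[of "k + 1"] by simp
  qed (use assms in auto)
qed

lemma stern_poly_at_2: "poly (stern_poly n) 2 = int n"
  by (induction n rule: stern_induct) (simp_all add: stern_poly_even stern_poly_odd)

lemma stern_poly_at_0: "poly (stern_poly n) 0 = (if odd n then 1 else 0)"
  by (induction n rule: stern_induct) (simp_all add: stern_poly_even stern_poly_odd)

text \<open>Evaluation at 1 gives Stern's diatomic sequence, which is positive on
  positive indices \<dots>\<close>

lemma stern_poly_at_1_pos: "n \<ge> 1 \<Longrightarrow> poly (stern_poly n) 1 \<ge> 1"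
  by (induction n rule: stern_induct) (simp_all add: stern_poly_even stern_poly_odd)

text \<open>\<dots> and takes the value 1 only at powers of two: at an odd index 2k+1 > 1
  it is a sum of two positive values.\<close>

lemma stern_poly_at_1_eq_1:
  "n \<ge> 1 \<Longrightarrow> poly (stern_poly n) 1 = 1 \<Longrightarrow> \<exists>j. n = 2 ^ j"
proof (induction n rule: stern_induct)
  case one
  then show ?case by (metis power_0)
next
  case (even k)
  then have "poly (stern_poly k) 1 = 1" by (simp add: stern_poly_even)
  then obtain j where "k = 2 ^ j" using even by blast
  then show ?case by (metis power_Suc)
next
  case (odd k)
  then show ?case
    using stern_poly_at_1_pos[of k] stern_poly_at_1_pos[of "k + 1"]
    by (simp add: stern_poly_odd)
qed simp

text \<open>At 1 the difference B_{2k+1} - B_{2k} collapses to B_{k+1}, since the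
  factor t of B_{2k} = t B_k becomes 1.\<close>

lemma stern_poly_diff_at_1:
  "k \<ge> 1 \<Longrightarrow> poly (stern_poly (2 * k + 1) - stern_poly (2 * k)) 1 = poly (stern_poly (k + 1)) 1"
  by (simp add: stern_poly_even stern_poly_odd)

theorem theorem5p2:
  fixes n :: nat
  assumes "degree (stern_poly (n + 1) - stern_poly n) = 0"
  shows "(\<exists>m::nat. m \<ge> 1 \<and> n = 2 ^ m - 2) \<and> stern_poly (n + 1) - stern_poly n = 1"
proof -
  define D where "D = stern_poly (n + 1) - stern_poly n"
  obtain c where c: "D = [:c:]"
    using assms degree0_coeffs unfolding D_def by blast
  have "c = poly D 2" using c by simp
  also have "\<dots> = 1" by (simp add: D_def stern_poly_at_2)
  finally have D_eq_1: "D = 1" using c by (simp add: one_pCons)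
  then have "poly D 0 = 1" by simp
  then have "even n" by (auto simp: D_def stern_poly_at_0 split: if_splits)
  then obtain k where k: "n = 2 * k" by blast
  have "\<exists>m::nat. m \<ge> 1 \<and> n = 2 ^ m - 2"
  proof (cases "k = 0")
    case True
    then show ?thesis using k by (intro exI[of _ 1]) simp
  next
    case False
    then have "k \<ge> 1" by simp
    then have "poly (stern_poly (k + 1)) 1 = poly D 1"
      using stern_poly_diff_at_1[of k] by (simp only: D_def k)
    also have "\<dots> = 1" using D_eq_1 by simp
    finally have "poly (stern_poly (k + 1)) 1 = 1" .
    then obtain j where "k + 1 = 2 ^ j"
      using stern_poly_at_1_eq_1[of "k + 1"] by auto
    then show ?thesis using k by (intro exI[of _ "j + 1"]) simp
  qed
  then show ?thesis using D_eq_1 by (simp add: D_def)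
qed

end
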